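(* Let $A,B,C$ be the observed variables of the Triangle scenario, each taking values in $\{0,1\}$. Every distribution $P_{ABC}$ compatible with the Triangle scenario satisfies $$P_A(1)P_B(1)P_C(1)\le P_{AB}(11)P_C(1)+P_{BC}(11)P_A(1)+P_{AC}(11)P_B(1)+P_{ABC}(000),$$ where $P_A,P_B,P_C,P_{AB},P_{BC},P_{AC}$ are the marginals of $P_{ABC}$.
   Context: The Triangle scenario is the causal structure with observed nodes $A,B,C$, latent nodes $X,Y,Z$ and edges $X\to A$, $X\to B$, $Y\to A$, $Y\to C$, $Z\to B$, $Z\to C$. A distribution $P_{ABC}$ is compatible with it if there exist distributions $P_X,P_Y,P_Z$ (latent variables of arbitrary cardinality) and conditionals $P_{A|XY},P_{B|XZ},P_{C|YZ}$ such that $P_{ABC}$ is the marginal of $P_XP_YP_ZP_{A|XY}P_{B|XZ}P_{C|YZ}$. *)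

theory Defs
  imports "HOL-Probability.Probability"
begin

text \<open>Binary outcomes are encoded as bool (True = 1, False = 0).
  A response kernel for a binary variable given latent values is described by
  q = probability of outcome 1; kern q v = P(outcome = v).\<close>

definition kern :: "real \<Rightarrow> bool \<Rightarrow> real" where
  "kern q v = (if v then q else 1 - q)"

text \<open>A triangle model for P with latent probability spaces MX, MY, MZ
  (arbitrary measurable spaces, hence arbitrary cardinality) and conditionals
  qA (A given X,Y), qB (B given X,Z), qC (C given Y,Z).\<close>

definition triangle_model ::
  "(bool \<Rightarrow> bool \<Rightarrow> bool \<Rightarrow> real) \<Rightarrow> 'x measure \<Rightarrow> 'y measure \<Rightarrow> 'z measure \<Rightarrow>
   ('x \<Rightarrow> 'y \<Rightarrow> real) \<Rightarrow> ('x \<Rightarrow> 'z \<Rightarrow> real) \<Rightarrow> ('y \<Rightarrow> 'z \<Rightarrow> real) \<Rightarrow> bool" where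
  "triangle_model P MX MY MZ qA qB qC \<longleftrightarrow>
     prob_space MX \<and> prob_space MY \<and> prob_space MZ \<and>
     (\<lambda>(x,y). qA x y) \<in> borel_measurable (MX \<Otimes>\<^sub>M MY) \<and>
     (\<lambda>(x,z). qB x z) \<in> borel_measurable (MX \<Otimes>\<^sub>M MZ) \<and>
     (\<lambda>(y,z). qC y z) \<in> borel_measurable (MY \<Otimes>\<^sub>M MZ) \<and>
     (\<forall>x\<in>space MX. \<forall>y\<in>space MY. 0 \<le> qA x y \<and> qA x y \<le> 1) \<and>
     (\<forall>x\<in>space MX. \<forall>z\<in>space MZ. 0 \<le> qB x z \<and> qB x z \<le> 1) \<and>
     (\<forall>y\<in>space MY. \<forall>z\<in>space MZ. 0 \<le> qC y z \<and> qC y z \<le> 1) \<and>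
     (\<forall>a b c. P a b c =
        (\<integral>w. kern (qA (fst w) (fst (snd w))) a * kern (qB (fst w) (snd (snd w))) b
                 * kern (qC (fst (snd w)) (snd (snd w))) c
          \<partial>(MX \<Otimes>\<^sub>M (MY \<Otimes>\<^sub>M MZ))))"

end

theory Submission
  imports Defs
begin

text \<open>Put \<open>a = qA x y\<close>, \<open>b = qB x z\<close>, \<open>c = qC y z\<close> and average each over one of its
  latent arguments: \<open>a'(x) = E\<^sub>y a\<close>, \<open>b'(z) = E\<^sub>x b\<close>, \<open>c'(y) = E\<^sub>z c\<close>. Then
  \<open>P_A(1) = E a'\<close>, \<open>P_B(1) = E b'\<close>, \<open>P_C(1) = E c'\<close>, and since \<open>a'\<close>, \<open>b'\<close>, \<open>c'\<close> depend on
  distinct independent latents, the left-hand side is \<open>E[a' b' c']\<close>. Pointwise, for numbers in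
  \<open>[0,1]\<close>, \<open>a' b' c' \<le> a' b c' + a' b' c + a b' c' + (1-a)(1-b)(1-c)\<close>. Taking expectations,
  every mixed term factorises, e.g. \<open>E[a'(x) b(x,z) c'(y)] = E[a b] E[c'] = P_AB(11) P_C(1)\<close>,
  because averaging \<open>a\<close> over \<open>y\<close> gives \<open>a'\<close>.\<close>

lemma unit_interval_product_bound:
  fixes p q r u s w :: real
  assumes "0 \<le> p" "p \<le> 1" "0 \<le> q" "q \<le> 1" "0 \<le> r" "r \<le> 1"
    and "0 \<le> u" "u \<le> 1" "0 \<le> s" "s \<le> 1" "0 \<le> w" "w \<le> 1"
  shows "p * q * r \<le> p * s * r + p * q * w + u * q * r + (1 - u) * (1 - s) * (1 - w)"
proof -
  define t where "t = p * q * r"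
  have t: "0 \<le> t" "t \<le> 1"
    using assms unfolding t_def by (auto intro: mult_le_one)
  have "t * s \<le> p * s * r" "t * w \<le> p * q * w" "t * u \<le> u * q * r"
    using mult_left_le[of q "p * s * r"] mult_left_le[of r "p * q * w"] mult_left_le[of p "u * q * r"]
      assms unfolding t_def by (simp_all add: algebra_simps)
  moreover have "t \<le> t * (u + s + w) + (1 - u) * (1 - s) * (1 - w)"
  proof (cases "u + s + w \<ge> 1")
    case True
    have "0 \<le> (1 - u) * (1 - s) * (1 - w)"
      using assms by simp
    then show ?thesis
      using mult_left_mono[OF True t(1)] by simp
  next
    case False
    have "u * s * w \<le> u * s" "0 \<le> u * w" "0 \<le> s * w"
      using assms by (simp_all add: mult_left_le)
    then have "1 - u - s - w \<le> (1 - u) * (1 - s) * (1 - w)"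
      by (simp add: algebra_simps)
    moreover have "t * (1 - u - s - w) \<le> 1 - u - s - w"
      using t False by (simp add: mult_left_le_one_le)
    ultimately show ?thesis
      by (simp add: algebra_simps)
  qed
  ultimately show ?thesis
    unfolding t_def by (simp add: algebra_simps)
qed

lemma (in prob_space) integral_unit_interval:
  fixes f :: "'a \<Rightarrow> real"
  assumes "f \<in> borel_measurable M" "\<And>x. x \<in> space M \<Longrightarrow> 0 \<le> f x \<and> f x \<le> 1"
  shows "0 \<le> (\<integral>x. f x \<partial>M) \<and> (\<integral>x. f x \<partial>M) \<le> 1"
proof -
  have "integrable M f"
    by (rule integrable_const_bound[where B = 1]) (use assms in auto)
  then show ?thesis
    using assms by (auto intro!: integral_ge_const integral_le_const)
qed

lemma
  fixes F :: "'x \<times> 'y \<times> 'z \<Rightarrow> real"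
  assumes "prob_space MX" "prob_space MY" "prob_space MZ"
    and F: "F \<in> borel_measurable (MX \<Otimes>\<^sub>M (MY \<Otimes>\<^sub>M MZ))"
    and bound: "\<And>w. w \<in> space (MX \<Otimes>\<^sub>M (MY \<Otimes>\<^sub>M MZ)) \<Longrightarrow> \<bar>F w\<bar> \<le> B"
  shows integrable_bounded_triple_product: "integrable (MX \<Otimes>\<^sub>M (MY \<Otimes>\<^sub>M MZ)) F"
    and integral_triple_product_xyz:
      "(\<integral>w. F w \<partial>(MX \<Otimes>\<^sub>M (MY \<Otimes>\<^sub>M MZ))) = (\<integral>x. \<integral>y. \<integral>z. F (x, y, z) \<partial>MZ \<partial>MY \<partial>MX)"
    and integral_triple_product_yzx:
      "(\<integral>w. F w \<partial>(MX \<Otimes>\<^sub>M (MY \<Otimes>\<^sub>M MZ))) = (\<integral>y. \<integral>z. \<integral>x. F (x, y, z) \<partial>MX \<partial>MZ \<partial>MY)"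
proof -
  interpret X: prob_space MX by fact
  interpret Y: prob_space MY by fact
  interpret Z: prob_space MZ by fact
  interpret YZ: pair_prob_space MY MZ ..
  interpret XYZ: pair_prob_space MX "MY \<Otimes>\<^sub>M MZ" ..
  show int: "integrable (MX \<Otimes>\<^sub>M (MY \<Otimes>\<^sub>M MZ)) F"
    using F bound by (intro XYZ.integrable_const_bound[where B = B]) auto
  have "(\<integral>w. F w \<partial>(MX \<Otimes>\<^sub>M (MY \<Otimes>\<^sub>M MZ))) = (\<integral>x. \<integral>p. F (x, p) \<partial>(MY \<Otimes>\<^sub>M MZ) \<partial>MX)"
    by (rule XYZ.integral_fst'[OF int, symmetric])
  also have "\<dots> = (\<integral>x. \<integral>y. \<integral>z. F (x, y, z) \<partial>MZ \<partial>MY \<partial>MX)"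
  proof (rule Bochner_Integration.integral_cong[OF refl])
    fix x assume "x \<in> space MX"
    with F bound have "integrable (MY \<Otimes>\<^sub>M MZ) (\<lambda>p. F (x, p))"
      by (intro YZ.integrable_const_bound[where B = B]) (auto simp: space_pair_measure)
    then show "(\<integral>p. F (x, p) \<partial>(MY \<Otimes>\<^sub>M MZ)) = (\<integral>y. \<integral>z. F (x, y, z) \<partial>MZ \<partial>MY)"
      by (rule YZ.integral_fst'[symmetric])
  qed
  finally show "(\<integral>w. F w \<partial>(MX \<Otimes>\<^sub>M (MY \<Otimes>\<^sub>M MZ))) = (\<integral>x. \<integral>y. \<integral>z. F (x, y, z) \<partial>MZ \<partial>MY \<partial>MX)" .
  have int': "integrable (MX \<Otimes>\<^sub>M (MY \<Otimes>\<^sub>M MZ)) (\<lambda>(x, p). F (x, p))"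
    using int by simp
  have "(\<integral>w. F w \<partial>(MX \<Otimes>\<^sub>M (MY \<Otimes>\<^sub>M MZ))) = (\<integral>p. \<integral>x. F (x, p) \<partial>MX \<partial>(MY \<Otimes>\<^sub>M MZ))"
    using XYZ.integral_snd[OF int'] by simp
  also have "\<dots> = (\<integral>y. \<integral>z. \<integral>x. F (x, y, z) \<partial>MX \<partial>MZ \<partial>MY)"
    using YZ.integral_fst'[OF XYZ.integrable_snd[OF int']] by simp
  finally show "(\<integral>w. F w \<partial>(MX \<Otimes>\<^sub>M (MY \<Otimes>\<^sub>M MZ))) = (\<integral>y. \<integral>z. \<integral>x. F (x, y, z) \<partial>MX \<partial>MZ \<partial>MY)" .
qed

lemma sum_product3:
  "(\<Sum>a\<in>A. \<Sum>b\<in>B. \<Sum>c\<in>C. f a * g b * h c) = sum f A * sum g B * (sum h C :: real)"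
proof -
  have "sum f A * sum g B * sum h C = sum f A * (\<Sum>b\<in>B. \<Sum>c\<in>C. g b * h c)"
    by (simp only: mult.assoc sum_product[of g B h C])
  also have "\<dots> = (\<Sum>a\<in>A. \<Sum>b\<in>B. \<Sum>c\<in>C. f a * (g b * h c))"
    unfolding sum_distrib_right[of f A] by (simp only: sum_distrib_left)
  finally show ?thesis
    by (simp only: mult.assoc)
qed

locale triangle =
  fixes P :: "bool \<Rightarrow> bool \<Rightarrow> bool \<Rightarrow> real"
    and MX :: "'x measure" and MY :: "'y measure" and MZ :: "'z measure"
    and qA :: "'x \<Rightarrow> 'y \<Rightarrow> real" and qB :: "'x \<Rightarrow> 'z \<Rightarrow> real" and qC :: "'y \<Rightarrow> 'z \<Rightarrow> real"
  assumes model: "triangle_model P MX MY MZ qA qB qC"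
begin

abbreviation "M \<equiv> MX \<Otimes>\<^sub>M (MY \<Otimes>\<^sub>M MZ)"

abbreviation "qa w \<equiv> qA (fst w) (fst (snd w))"
abbreviation "qb w \<equiv> qB (fst w) (snd (snd w))"
abbreviation "qc w \<equiv> qC (fst (snd w)) (snd (snd w))"

definition "qA_avg x = (\<integral>y. qA x y \<partial>MY)"
definition "qB_avg z = (\<integral>x. qB x z \<partial>MX)"
definition "qC_avg y = (\<integral>z. qC y z \<partial>MZ)"

sublocale X: prob_space MX using model unfolding triangle_model_def by blast
sublocale Y: prob_space MY using model unfolding triangle_model_def by blast
sublocale Z: prob_space MZ using model unfolding triangle_model_def by blast

lemma P_eq_integral:
  "P a b c = (\<integral>w. kern (qa w) a * kern (qb w) b * kern (qc w) c \<partial>M)"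
  using model unfolding triangle_model_def by blast

lemma
  shows qA_measurable: "(\<lambda>(x, y). qA x y) \<in> borel_measurable (MX \<Otimes>\<^sub>M MY)"
    and qB_measurable: "(\<lambda>(x, z). qB x z) \<in> borel_measurable (MX \<Otimes>\<^sub>M MZ)"
    and qC_measurable: "(\<lambda>(y, z). qC y z) \<in> borel_measurable (MY \<Otimes>\<^sub>M MZ)"
  using model unfolding triangle_model_def by blast+

lemma
  shows qA_bounds: "x \<in> space MX \<Longrightarrow> y \<in> space MY \<Longrightarrow> 0 \<le> qA x y \<and> qA x y \<le> 1"
    and qB_bounds: "x \<in> space MX \<Longrightarrow> z \<in> space MZ \<Longrightarrow> 0 \<le> qB x z \<and> qB x z \<le> 1"
    and qC_bounds: "y \<in> space MY \<Longrightarrow> z \<in> space MZ \<Longrightarrow> 0 \<le> qC y z \<and> qC y z \<le> 1"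
  using model unfolding triangle_model_def by blast+

lemma
  shows qa_measurable[measurable]: "qa \<in> borel_measurable M"
    and qb_measurable[measurable]: "qb \<in> borel_measurable M"
    and qc_measurable[measurable]: "qc \<in> borel_measurable M"
  using qA_measurable qB_measurable qC_measurable by measurable

lemma
  shows qA_avg_measurable[measurable]: "qA_avg \<in> borel_measurable MX"
    and qB_avg_measurable[measurable]: "qB_avg \<in> borel_measurable MZ"
    and qC_avg_measurable[measurable]: "qC_avg \<in> borel_measurable MY"
proof -
  show "qA_avg \<in> borel_measurable MX"
    unfolding qA_avg_def using qA_measurable by (rule Y.borel_measurable_lebesgue_integral)
  show "qC_avg \<in> borel_measurable MY"
    unfolding qC_avg_def using qC_measurable by (rule Z.borel_measurable_lebesgue_integral)
  have "(\<lambda>(z, x). qB x z) \<in> borel_measurable (MZ \<Otimes>\<^sub>M MX)"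
    using measurable_pair_swap[OF qB_measurable] by simp
  then show "qB_avg \<in> borel_measurable MZ"
    unfolding qB_avg_def by (rule X.borel_measurable_lebesgue_integral)
qed

lemma qA_avg_bounds: "x \<in> space MX \<Longrightarrow> 0 \<le> qA_avg x \<and> qA_avg x \<le> 1"
  unfolding qA_avg_def using qA_bounds
  by (intro Y.integral_unit_interval measurable_Pair_compose_split[OF qA_measurable]) auto

lemma qB_avg_bounds: "z \<in> space MZ \<Longrightarrow> 0 \<le> qB_avg z \<and> qB_avg z \<le> 1"
  unfolding qB_avg_def using qB_bounds
  by (intro X.integral_unit_interval measurable_Pair_compose_split[OF qB_measurable]) auto

lemma qC_avg_bounds: "y \<in> space MY \<Longrightarrow> 0 \<le> qC_avg y \<and> qC_avg y \<le> 1"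
  unfolding qC_avg_def using qC_bounds
  by (intro Z.integral_unit_interval measurable_Pair_compose_split[OF qC_measurable]) auto

lemma bounds_on_space:
  assumes "w \<in> space M"
  shows "0 \<le> qa w \<and> qa w \<le> 1 \<and> 0 \<le> qb w \<and> qb w \<le> 1 \<and> 0 \<le> qc w \<and> qc w \<le> 1 \<and>
    0 \<le> qA_avg (fst w) \<and> qA_avg (fst w) \<le> 1 \<and> 0 \<le> qB_avg (snd (snd w)) \<and>
    qB_avg (snd (snd w)) \<le> 1 \<and> 0 \<le> qC_avg (fst (snd w)) \<and> qC_avg (fst (snd w)) \<le> 1"
  using assms qA_bounds qB_bounds qC_bounds qA_avg_bounds qB_avg_bounds qC_avg_bounds
  by (auto simp: space_pair_measure)

lemmas integrable_bounded =
  integrable_bounded_triple_product[OF X.prob_space_axioms Y.prob_space_axioms Z.prob_space_axioms]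
lemmas integral_xyz =
  integral_triple_product_xyz[OF X.prob_space_axioms Y.prob_space_axioms Z.prob_space_axioms]
lemmas integral_yzx =
  integral_triple_product_yzx[OF X.prob_space_axioms Y.prob_space_axioms Z.prob_space_axioms]

lemma sum_P_eq_integral:
  "(\<Sum>a\<in>S1. \<Sum>b\<in>S2. \<Sum>c\<in>S3. P a b c) =
    (\<integral>w. (\<Sum>a\<in>S1. kern (qa w) a) * (\<Sum>b\<in>S2. kern (qb w) b) * (\<Sum>c\<in>S3. kern (qc w) c) \<partial>M)"
proof -
  have "integrable M (\<lambda>w. kern (qa w) a * kern (qb w) b * kern (qc w) c)" for a b c
    by (rule integrable_bounded)
      (auto simp: kern_def abs_mult dest!: bounds_on_space intro!: mult_le_one)
  then show ?thesis
    by (simp add: P_eq_integral integral_sum[symmetric] integrable_sum sum_product3[symmetric])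
qed

abbreviation "P_A \<equiv> \<Sum>b\<in>UNIV. \<Sum>c\<in>UNIV. P True b c"
abbreviation "P_B \<equiv> \<Sum>a\<in>UNIV. \<Sum>c\<in>UNIV. P a True c"
abbreviation "P_C \<equiv> \<Sum>a\<in>UNIV. \<Sum>b\<in>UNIV. P a b True"
abbreviation "P_AB \<equiv> \<Sum>c\<in>UNIV. P True True c"
abbreviation "P_BC \<equiv> \<Sum>a\<in>UNIV. P a True True"
abbreviation "P_AC \<equiv> \<Sum>b\<in>UNIV. P True b True"

lemma
  shows P_A_integral: "P_A = (\<integral>w. qa w \<partial>M)"
    and P_B_integral: "P_B = (\<integral>w. qb w \<partial>M)"
    and P_C_integral: "P_C = (\<integral>w. qc w \<partial>M)"
    and P_AB_integral: "P_AB = (\<integral>w. qa w * qb w \<partial>M)"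
    and P_BC_integral: "P_BC = (\<integral>w. qb w * qc w \<partial>M)"
    and P_AC_integral: "P_AC = (\<integral>w. qa w * qc w \<partial>M)"
  using sum_P_eq_integral[of "{True}" UNIV UNIV] sum_P_eq_integral[of UNIV "{True}" UNIV]
    sum_P_eq_integral[of UNIV UNIV "{True}"] sum_P_eq_integral[of "{True}" "{True}" UNIV]
    sum_P_eq_integral[of UNIV "{True}" "{True}"] sum_P_eq_integral[of "{True}" UNIV "{True}"]
  by (simp_all add: kern_def UNIV_bool)

lemma P_000_integral: "P False False False = (\<integral>w. (1 - qa w) * (1 - qb w) * (1 - qc w) \<partial>M)"
  by (simp add: P_eq_integral kern_def)

lemma
  shows P_A_iterated: "P_A = (\<integral>x. qA_avg x \<partial>MX)"
    and P_B_iterated: "P_B = (\<integral>z. qB_avg z \<partial>MZ)"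
    and P_C_iterated: "P_C = (\<integral>y. qC_avg y \<partial>MY)"
    and P_AB_iterated: "P_AB = (\<integral>x. qA_avg x * (\<integral>z. qB x z \<partial>MZ) \<partial>MX)"
    and P_BC_iterated: "P_BC = (\<integral>y. \<integral>z. qB_avg z * qC y z \<partial>MZ \<partial>MY)"
    and P_AC_iterated: "P_AC = (\<integral>x. \<integral>y. qA x y * qC_avg y \<partial>MY \<partial>MX)"
  unfolding P_A_integral P_B_integral P_C_integral P_AB_integral P_BC_integral P_AC_integral
  by (subst integral_xyz integral_yzx;
      auto simp: qA_avg_def[abs_def] qB_avg_def[abs_def] qC_avg_def[abs_def]
        X.prob_space Y.prob_space Z.prob_space abs_mult dest!: bounds_on_space intro!: mult_le_one)+

lemma integral_qA_avg_qB_avg_qC_avg: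
  "(\<integral>w. qA_avg (fst w) * qB_avg (snd (snd w)) * qC_avg (fst (snd w)) \<partial>M) = P_A * P_B * P_C"
  unfolding P_A_iterated P_B_iterated P_C_iterated
  by (subst integral_xyz) (auto simp: abs_mult dest!: bounds_on_space intro!: mult_le_one)

lemma integral_qA_avg_qb_qC_avg:
  "(\<integral>w. qA_avg (fst w) * qb w * qC_avg (fst (snd w)) \<partial>M) = P_AB * P_C"
  unfolding P_AB_iterated P_C_iterated
  by (subst integral_xyz) (auto simp: abs_mult dest!: bounds_on_space intro!: mult_le_one)

lemma integral_qA_avg_qB_avg_qc:
  "(\<integral>w. qA_avg (fst w) * qB_avg (snd (snd w)) * qc w \<partial>M) = P_BC * P_A"
  unfolding P_BC_iterated P_A_iterated
  by (subst integral_yzx) (auto simp: abs_mult mult.assoc dest!: bounds_on_space intro!: mult_le_one)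

lemma integral_qa_qB_avg_qC_avg:
  "(\<integral>w. qa w * qB_avg (snd (snd w)) * qC_avg (fst (snd w)) \<partial>M) = P_AC * P_B"
proof -
  have "(\<integral>w. qa w * qB_avg (snd (snd w)) * qC_avg (fst (snd w)) \<partial>M)
      = (\<integral>x. \<integral>y. qA x y * (\<integral>z. qB_avg z \<partial>MZ) * qC_avg y \<partial>MY \<partial>MX)"
    by (subst integral_xyz) (auto simp: abs_mult dest!: bounds_on_space intro!: mult_le_one)
  also have "\<dots> = (\<integral>x. \<integral>y. qA x y * qC_avg y \<partial>MY \<partial>MX) * (\<integral>z. qB_avg z \<partial>MZ)"
    by (simp only: mult.commute[of "qA _ _"] mult.assoc integral_mult_right_zero) (rule mult.commute)
  finally show ?thesis
    unfolding P_AC_iterated P_B_iterated .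
qed

lemma integral_product_bound:
  "(\<integral>w. qA_avg (fst w) * qB_avg (snd (snd w)) * qC_avg (fst (snd w)) \<partial>M)
    \<le> (\<integral>w. qA_avg (fst w) * qb w * qC_avg (fst (snd w)) \<partial>M)
      + (\<integral>w. qA_avg (fst w) * qB_avg (snd (snd w)) * qc w \<partial>M)
      + (\<integral>w. qa w * qB_avg (snd (snd w)) * qC_avg (fst (snd w)) \<partial>M)
      + (\<integral>w. (1 - qa w) * (1 - qb w) * (1 - qc w) \<partial>M)"
  (is "integral\<^sup>L M ?L \<le> integral\<^sup>L M ?F1 + integral\<^sup>L M ?F2 + integral\<^sup>L M ?F3 + integral\<^sup>L M ?F4")
proof -
  have integrable: "integrable M ?L" "integrable M ?F1" "integrable M ?F2" "integrable M ?F3"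
    "integrable M ?F4"
    by (rule integrable_bounded; auto simp: abs_mult dest!: bounds_on_space intro!: mult_le_one)+
  have "integral\<^sup>L M ?L \<le> (\<integral>w. ?F1 w + ?F2 w + ?F3 w + ?F4 w \<partial>M)"
  proof (rule integral_mono)
    fix w assume "w \<in> space M"
    then show "?L w \<le> ?F1 w + ?F2 w + ?F3 w + ?F4 w"
      by (intro unit_interval_product_bound) (auto dest!: bounds_on_space)
  qed (use integrable in auto)
  also have "\<dots> = integral\<^sup>L M ?F1 + integral\<^sup>L M ?F2 + integral\<^sup>L M ?F3 + integral\<^sup>L M ?F4"
    using integrable by simp
  finally show ?thesis .
qed

lemma marginal_product_bound:
  "P_A * P_B * P_C \<le> P_AB * P_C + P_BC * P_A + P_AC * P_B + P False False False"
  using integral_product_bound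
  unfolding integral_qA_avg_qB_avg_qC_avg integral_qA_avg_qb_qC_avg integral_qA_avg_qB_avg_qc
    integral_qa_qB_avg_qC_avg P_000_integral .

end

theorem mainTheorem10:
  fixes P :: "bool \<Rightarrow> bool \<Rightarrow> bool \<Rightarrow> real"
    and MX :: "'x measure" and MY :: "'y measure" and MZ :: "'z measure"
    and qA :: "'x \<Rightarrow> 'y \<Rightarrow> real" and qB :: "'x \<Rightarrow> 'z \<Rightarrow> real" and qC :: "'y \<Rightarrow> 'z \<Rightarrow> real"
  assumes "triangle_model P MX MY MZ qA qB qC"
  shows "(\<Sum>b\<in>UNIV. \<Sum>c\<in>UNIV. P True b c) * (\<Sum>a\<in>UNIV. \<Sum>c\<in>UNIV. P a True c)
           * (\<Sum>a\<in>UNIV. \<Sum>b\<in>UNIV. P a b True)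
         \<le> (\<Sum>c\<in>UNIV. P True True c) * (\<Sum>a\<in>UNIV. \<Sum>b\<in>UNIV. P a b True)
           + (\<Sum>a\<in>UNIV. P a True True) * (\<Sum>b\<in>UNIV. \<Sum>c\<in>UNIV. P True b c)
           + (\<Sum>b\<in>UNIV. P True b True) * (\<Sum>a\<in>UNIV. \<Sum>c\<in>UNIV. P a True c)
           + P False False False"
  using triangle.marginal_product_bound[OF triangle.intro, OF assms] .

end
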